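(* Let $F:\mathbb{Z}\to\mathbb{C}$ be any function and $n\in\mathbb{Z}$. For $m=1,2,3,\dots$ define $$J_m(n,F):=\sum_{i\in\mathbb{Z}}F(i)F(i+n)F(i+2n)\cdots F\big(i+n(m-1)\big)\,:\psi_i\psi^\dagger_{i+nm}:.$$ Then $[J_m(n,F),J_{m'}(n,F)]=0$ for all $m,m'\ge1$.
   Context: Let $\psi_i,\psi^\dagger_i$ ($i\in\mathbb{Z}$) be charged free fermions, i.e. operators on the fermionic Fock space $\mathcal{F}$ satisfying $[\psi_i,\psi_j]_+=[\psi^\dagger_i,\psi^\dagger_j]_+=0$ and $[\psi_i,\psi^\dagger_j]_+=\delta_{ij}$. The space $\mathcal{F}$ is spanned by the vectors obtained from the vacuum $|0\rangle$ by applying finitely many $\psi_i,\psi^\dagger_i$; the vacuum satisfies $\psi^\dagger_i|0\rangle=0$ and $\psi_{-i-1}|0\rangle=0$ for $i\ge0$, and the dual vacuum satisfies $\langle0|\psi_i=0$, $\langle0|\psi^\dagger_{-i-1}=0$ for $i\ge0$, $\langle0|0\rangle=1$. Normal ordering: $:\psi_i\psi^\dagger_j:=\psi_i\psi^\dagger_j-\langle0|\psi_i\psi^\dagger_j|0\rangle$. The infinite sums act on each vector of $\mathcal F$ through finitely many nonzero terms. *)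

theory Defs
  imports Complex_Main
begin

text \<open>Concrete fermionic Fock space (semi-infinite wedge / Maya diagram model).
A basis vector is labelled by a Maya diagram S (the set of occupied modes), which
differs from the vacuum diagram {..<0} in finitely many places. The operator
psi j occupies mode j, psid j empties mode j (both with the usual sign).\<close>

type_synonym fvec = "int set \<Rightarrow> complex"

definition maya :: "int set \<Rightarrow> bool" where
  "maya S \<longleftrightarrow> finite (S - {..<0}) \<and> finite ({..<0} - S)"

definition fock :: "fvec set" where
  "fock = {v. finite {S. v S \<noteq> 0} \<and> (\<forall>S. v S \<noteq> 0 \<longrightarrow> maya S)}"

definition fsign :: "int set \<Rightarrow> int \<Rightarrow> complex" where
  "fsign S j = (-1) ^ card {k \<in> S. j < k}"

text \<open>psi j |S> = fsign S j |S \<union> {j}> if j \<notin> S, else 0.\<close>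
definition psi :: "int \<Rightarrow> fvec \<Rightarrow> fvec" where
  "psi j v = (\<lambda>T. if j \<in> T then fsign (T - {j}) j * v (T - {j}) else 0)"

text \<open>psid j |S> = fsign S j |S - {j}> if j \<in> S, else 0.\<close>
definition psid :: "int \<Rightarrow> fvec \<Rightarrow> fvec" where
  "psid j v = (\<lambda>T. if j \<notin> T then fsign T j * v (insert j T) else 0)"

definition vac :: fvec where
  "vac = (\<lambda>T. if T = {..<0} then 1 else 0)"

text \<open>Vacuum expectation value <0|X|0>: the dual vacuum extracts the vacuum coefficient.\<close>
definition vev :: "(fvec \<Rightarrow> fvec) \<Rightarrow> complex" where
  "vev X = X vac {..<0}"

definition nord :: "int \<Rightarrow> int \<Rightarrow> fvec \<Rightarrow> fvec" where
  "nord i j v = (\<lambda>T. psi i (psid j v) T - vev (\<lambda>w. psi i (psid j w)) * v T)"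

text \<open>J_m(n,F) = sum_i F(i)F(i+n)...F(i+n(m-1)) :psi_i psid_{i+nm}:, the infinite sum
acting on a vector through its finitely many nonzero terms.\<close>
definition Jop :: "nat \<Rightarrow> int \<Rightarrow> (int \<Rightarrow> complex) \<Rightarrow> fvec \<Rightarrow> fvec" where
  "Jop m n F v = (\<lambda>T. \<Sum>i \<in> {i. nord i (i + n * int m) v \<noteq> (\<lambda>_. 0)}.
      (\<Prod>k<m. F (i + n * int k)) * nord i (i + n * int m) v T)"

end

theory Submission
  imports Defs
begin

text \<open>The normal ordered bilinears obey the commutation relations of \<open>gl(\<infinity>)\<close>:
\<open>[:\<psi>\<^sub>i\<psi>\<^sup>\<dagger>\<^sub>j:, :\<psi>\<^sub>k\<psi>\<^sup>\<dagger>\<^sub>l:] = \<delta>\<^sub>j\<^sub>k \<psi>\<^sub>i\<psi>\<^sup>\<dagger>\<^sub>l - \<delta>\<^sub>i\<^sub>l \<psi>\<^sub>k\<psi>\<^sup>\<dagger>\<^sub>j\<close>, the central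
terms of the normal ordering cancelling. With \<open>a\<^sub>i\<close>, \<open>b\<^sub>i\<close> the products of \<open>m\<close>, \<open>m'\<close>
consecutive values of \<open>F\<close> along \<open>i, i+n, \<dots>\<close>, the commutator \<open>[J\<^sub>m, J\<^sub>m\<^sub>']\<close> is therefore
\<open>\<Sum>\<^sub>i (a\<^sub>i b\<^sub>i\<^sub>+\<^sub>n\<^sub>m - b\<^sub>i a\<^sub>i\<^sub>+\<^sub>n\<^sub>m\<^sub>') \<psi>\<^sub>i\<psi>\<^sup>\<dagger>\<^sub>i\<^sub>+\<^sub>n\<^sub>(\<^sub>m\<^sub>+\<^sub>m\<^sub>'\<^sub>)\<close>, and both coefficient
products are the product of \<open>m + m'\<close> consecutive values. The reindexing of the sums is
legitimate because, for \<open>n \<noteq> 0\<close>, \<open>\<psi>\<^sub>i\<psi>\<^sup>\<dagger>\<^sub>i\<^sub>+\<^sub>n\<^sub>(\<^sub>m\<^sub>+\<^sub>m\<^sub>'\<^sub>)\<close> kills a given vector for all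
but finitely many \<open>i\<close>; for \<open>n = 0\<close> no shift occurs.\<close>

definition maya_supported :: "fvec \<Rightarrow> bool" where
  "maya_supported v \<longleftrightarrow> (\<forall>S. v S \<noteq> 0 \<longrightarrow> maya S)"

lemma fock_iff: "v \<in> fock \<longleftrightarrow> finite {S. v S \<noteq> 0} \<and> maya_supported v"
  by (auto simp: fock_def maya_supported_def)

lemma maya_insert_iff [simp]: "maya (insert i S) \<longleftrightarrow> maya S"
proof -
  have "insert i S - {..<0} \<subseteq> insert i (S - {..<0})" "S - {..<0} \<subseteq> insert i S - {..<0}"
    "{..<0} - insert i S \<subseteq> {..<0} - S" "{..<0} - S \<subseteq> insert i ({..<0} - insert i S)"
    by auto
  then show ?thesis
    unfolding maya_def by (meson finite_insert finite_subset)
qed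

lemma maya_Diff_singleton_iff [simp]: "maya (S - {i}) \<longleftrightarrow> maya S"
  by (metis insert_Diff_single maya_insert_iff)

lemma finite_maya_above: "maya S \<Longrightarrow> finite {k \<in> S. j < k}"
  by (rule finite_subset[of _ "(S - {..<0}) \<union> {j<..<0}"]) (auto simp: maya_def)

lemma fsign_square: "fsign S i * fsign S i = 1"
  by (simp add: fsign_def flip: power_add)

lemma fsign_insert_self [simp]: "fsign (insert i S) i = fsign S i"
  unfolding fsign_def by (metis (lifting) insert_iff less_irrefl)

lemma fsign_Diff_self [simp]: "fsign (S - {i}) i = fsign S i"
  by (metis fsign_insert_self insert_Diff_single)

lemma fsign_insert:
  assumes "maya S" "j \<notin> S"
  shows "fsign (insert j S) i = (if i < j then -1 else 1) * fsign S i"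
proof -
  have "{k \<in> insert j S. i < k} = (if i < j then insert j {k \<in> S. i < k} else {k \<in> S. i < k})"
    by auto
  then show ?thesis
    using assms finite_maya_above[of S i] by (simp add: fsign_def)
qed

lemma fsign_Diff:
  assumes "maya S" "j \<in> S"
  shows "fsign (S - {j}) i = (if i < j then -1 else 1) * fsign S i"
  using fsign_insert[of "S - {j}" j i] assms by (simp add: insert_absorb)

lemma maya_supported_psi: "maya_supported v \<Longrightarrow> maya_supported (psi i v)"
  unfolding maya_supported_def psi_def by (metis maya_Diff_singleton_iff mult_zero_right)

lemma maya_supported_psid: "maya_supported v \<Longrightarrow> maya_supported (psid i v)"
  unfolding maya_supported_def psid_def by (metis maya_insert_iff mult_zero_right)

lemma psi_psid_anticomm:
  assumes "maya_supported v"
  shows "psi i (psid j v) T + psid j (psi i v) T = (if i = j then v T else 0)"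
proof (cases "i = j")
  case True
  then show ?thesis
    by (cases "i \<in> T") (simp_all add: psi_def psid_def insert_absorb fsign_square flip: mult.assoc)
next
  case False
  show ?thesis
  proof (cases "i \<in> T \<and> j \<notin> T \<and> v (insert j T - {i}) \<noteq> 0")
    case True
    then have "maya T" "insert j (T - {i}) = insert j T - {i}"
      using assms False by (auto simp: maya_supported_def)
    then show ?thesis
      using True False by (simp add: psi_def psid_def fsign_insert fsign_Diff del: fsign_Diff_self)
  next
    case False
    with \<open>i \<noteq> j\<close> show ?thesis
      by (auto simp: psi_def psid_def insert_Diff_if)
  qed
qed

lemma psi_anticomm:
  assumes "maya_supported v"
  shows "psi i (psi k v) T = - psi k (psi i v) T"
proof (cases "i \<noteq> k \<and> i \<in> T \<and> k \<in> T \<and> v (T - {i} - {k}) \<noteq> 0")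
  case True
  then have "maya T" "T - {k} - {i} = T - {i} - {k}"
    using assms by (auto simp: maya_supported_def)
  then show ?thesis
    using True by (simp add: psi_def fsign_Diff del: fsign_Diff_self)
next
  case False
  then show ?thesis
    by (auto simp: psi_def Diff_insert2[symmetric] insert_commute)
qed

lemma psid_anticomm:
  assumes "maya_supported v"
  shows "psid j (psid l v) T = - psid l (psid j v) T"
proof (cases "j \<noteq> l \<and> j \<notin> T \<and> l \<notin> T \<and> v (insert l (insert j T)) \<noteq> 0")
  case True
  then have "maya T"
    using assms by (auto simp: maya_supported_def)
  then show ?thesis
    using True by (simp add: psid_def fsign_insert insert_commute)
next
  case False
  then show ?thesis
    by (auto simp: psid_def insert_commute)
qed

lemma psi_diff: "psi i (\<lambda>T. f T - g T) = (\<lambda>T. psi i f T - psi i g T)"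
  by (auto simp: psi_def algebra_simps)

lemma psid_diff: "psid j (\<lambda>T. f T - g T) = (\<lambda>T. psid j f T - psid j g T)"
  by (auto simp: psid_def algebra_simps)

lemma psi_scale: "psi i (\<lambda>T. c * f T) = (\<lambda>T. c * psi i f T)"
  by (auto simp: psi_def)

lemma psid_scale: "psid j (\<lambda>T. c * f T) = (\<lambda>T. c * psid j f T)"
  by (auto simp: psid_def)

lemma psi_uminus: "psi i (\<lambda>T. - f T) = (\<lambda>T. - psi i f T)"
  by (auto simp: psi_def)

lemma psi_if_zero: "psi i (\<lambda>T. if b then f T else 0) = (\<lambda>T. if b then psi i f T else 0)"
  by (auto simp: psi_def)

lemma psi_sum: "psi i (\<lambda>T. \<Sum>k\<in>K. f k T) = (\<lambda>T. \<Sum>k\<in>K. psi i (f k) T)"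
  by (auto simp: psi_def sum_distrib_left)

lemma psid_sum: "psid j (\<lambda>T. \<Sum>k\<in>K. f k T) = (\<lambda>T. \<Sum>k\<in>K. psid j (f k) T)"
  by (auto simp: psid_def sum_distrib_left)

text \<open>\<open>E i j\<close> is \<open>\<psi>\<^sub>i\<psi>\<^sup>\<dagger>\<^sub>j\<close>, which represents the elementary matrix \<open>E\<^sub>i\<^sub>j\<close> of \<open>gl(\<infinity>)\<close>.\<close>

definition E :: "int \<Rightarrow> int \<Rightarrow> fvec \<Rightarrow> fvec" where
  "E i j v = psi i (psid j v)"

lemma E_commutator:
  assumes "maya_supported v"
  shows "E i j (E k l v) T - E k l (E i j v) T
       = (if j = k then E i l v T else 0) - (if i = l then E k j v T else 0)"
proof -
  have psid_psi: "psid j (psi k w) = (\<lambda>T. (if k = j then w T else 0) - psi k (psid j w) T)"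
    if "maya_supported w" for w j k
    using psi_psid_anticomm[OF that, of k j] by (simp add: fun_eq_iff eq_diff_eq add.commute)
  have supp: "maya_supported (psid l v)" "maya_supported (psid j v)"
    "maya_supported (psid j (psid l v))"
    using assms by (simp_all add: maya_supported_psid)
  have "E i j (E k l v) T
      = (if k = j then E i l v T else 0) - psi i (psi k (psid j (psid l v))) T"
    unfolding E_def psid_psi[OF supp(1)] psi_diff psi_if_zero ..
  also have "\<dots> = (if k = j then E i l v T else 0) + psi k (psi i (psid j (psid l v))) T"
    using psi_anticomm[OF supp(3), of i k T] by simp
  finally have 1: "E i j (E k l v) T = \<dots>" .
  have swap: "psid l (psid j v) = (\<lambda>T. - psid j (psid l v) T)"
    by (rule ext) (rule psid_anticomm[OF assms])
  have 2: "E k l (E i j v) T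
      = (if i = l then E k j v T else 0) + psi k (psi i (psid j (psid l v))) T"
    unfolding E_def psid_psi[OF supp(2)] psi_diff psi_if_zero swap psi_uminus by simp
  show ?thesis
    using 1 2 by auto
qed

lemma nord_eq_E: "nord i j v = (\<lambda>T. E i j v T - vev (E i j) * v T)"
  by (simp add: nord_def E_def[abs_def])

lemma nord_commutator:
  assumes "maya_supported v"
  shows "nord i j (nord k l v) T - nord k l (nord i j v) T
       = (if j = k then E i l v T else 0) - (if i = l then E k j v T else 0)"
proof -
  have E_lin: "E i j (\<lambda>T. f T - c * g T) = (\<lambda>T. E i j f T - c * E i j g T)" for i j f g c
    unfolding E_def psid_diff psid_scale psi_diff psi_scale ..
  have "nord i j (nord k l v) T - nord k l (nord i j v) T = E i j (E k l v) T - E k l (E i j v) T"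
    unfolding nord_eq_E E_lin by (simp add: algebra_simps)
  with E_commutator[OF assms] show ?thesis
    by simp
qed

lemma nord_sum: "nord i j (\<lambda>T. \<Sum>k\<in>K. c k * f k T) = (\<lambda>T. \<Sum>k\<in>K. c k * nord i j (f k) T)"
  unfolding nord_eq_E E_def psid_sum psi_sum psid_scale psi_scale
  by (simp add: sum_distrib_left sum_subtractf algebra_simps)

lemma psi_in_fock:
  assumes "v \<in> fock"
  shows "psi i v \<in> fock"
proof -
  have "{T. psi i v T \<noteq> 0} \<subseteq> insert i ` {S. v S \<noteq> 0}"
  proof
    fix T assume "T \<in> {T. psi i v T \<noteq> 0}"
    then have "i \<in> T" "v (T - {i}) \<noteq> 0"
      by (auto simp: psi_def split: if_splits)
    then show "T \<in> insert i ` {S. v S \<noteq> 0}"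
      by (intro image_eqI[of _ _ "T - {i}"]) auto
  qed
  then show ?thesis
    using assms maya_supported_psi[of v i] finite_subset
    by (auto simp: fock_iff)
qed

lemma psid_in_fock:
  assumes "v \<in> fock"
  shows "psid i v \<in> fock"
proof -
  have "{T. psid i v T \<noteq> 0} \<subseteq> (\<lambda>S. S - {i}) ` {S. v S \<noteq> 0}"
  proof
    fix T assume "T \<in> {T. psid i v T \<noteq> 0}"
    then have "i \<notin> T" "v (insert i T) \<noteq> 0"
      by (auto simp: psid_def split: if_splits)
    then show "T \<in> (\<lambda>S. S - {i}) ` {S. v S \<noteq> 0}"
      by (intro image_eqI[of _ _ "insert i T"]) auto
  qed
  then show ?thesis
    using assms maya_supported_psid[of v i] finite_subset
    by (auto simp: fock_iff)
qed

lemma lincomb_in_fock: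
  assumes "finite K" "\<And>k. k \<in> K \<Longrightarrow> f k \<in> fock"
  shows "(\<lambda>T. \<Sum>k\<in>K. c k * f k T) \<in> fock"
proof -
  have supp: "{T. (\<Sum>k\<in>K. c k * f k T) \<noteq> 0} \<subseteq> (\<Union>k\<in>K. {T. f k T \<noteq> 0})"
    by (auto intro: ccontr)
  have "finite (\<Union>k\<in>K. {T. f k T \<noteq> 0})" "\<forall>k\<in>K. maya_supported (f k)"
    using assms by (auto simp: fock_iff)
  with supp show ?thesis
    unfolding fock_iff maya_supported_def by (blast intro: finite_subset)
qed

lemma nord_in_fock: "v \<in> fock \<Longrightarrow> nord i j v \<in> fock"
  using lincomb_in_fock[of "{True, False}" "\<lambda>b. if b then E i j v else v"
      "\<lambda>b. if b then 1 else - vev (E i j)"]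
  by (simp add: nord_eq_E E_def psi_in_fock psid_in_fock)

lemma E_diag: "E i i v T = (if i \<in> T then v T else 0)"
  by (cases "i \<in> T") (simp_all add: E_def psi_def psid_def insert_absorb fsign_square flip: mult.assoc)

lemma vev_E_off_diag: "i \<noteq> j \<Longrightarrow> vev (E i j) = 0"
  by (auto simp: vev_def E_def psi_def psid_def vac_def)

lemma nord_off_diag: "i \<noteq> j \<Longrightarrow> nord i j v = E i j v"
  by (simp add: nord_eq_E vev_E_off_diag)

text \<open>For \<open>d \<noteq> 0\<close>, \<open>:\<psi>\<^sub>i\<psi>\<^sup>\<dagger>\<^sub>i\<^sub>+\<^sub>d:\<close> moves a particle of \<open>S\<close> from \<open>i + d\<close> to the hole \<open>i\<close>; for \<open>d = 0\<close> it
measures the occupation of \<open>i\<close> against the vacuum. Either way \<open>i\<close> is pinned down by the finitely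
many holes and particles of \<open>S\<close>.\<close>

lemma nord_shift_nonzero:
  assumes "nord i (i + d) v T \<noteq> 0"
  shows "\<exists>S. v S \<noteq> 0 \<and> i \<in> ({..<0} - S) \<union> (\<lambda>k. k - d) ` (S - {..<0}) \<union> {0..<-d}"
proof (cases "d = 0")
  case True
  with assms have "v T \<noteq> 0" "(i \<in> T) \<noteq> (i < 0)"
    by (auto simp: nord_eq_E E_diag vev_def vac_def split: if_splits)
  with True show ?thesis
    by (intro exI[of _ T]) force
next
  case False
  with assms have "i \<in> T" "i + d \<notin> T" "v (insert (i + d) (T - {i})) \<noteq> 0"
    by (auto simp: nord_off_diag E_def psi_def psid_def split: if_splits)
  with False show ?thesis
    by (intro exI[of _ "insert (i + d) (T - {i})"]) (force simp: image_iff)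
qed

lemma finite_nord_shift_support:
  assumes "v \<in> fock"
  shows "finite {i. nord i (i + d) v \<noteq> (\<lambda>_. 0)}"
proof (rule finite_subset)
  show "{i. nord i (i + d) v \<noteq> (\<lambda>_. 0)}
      \<subseteq> (\<Union>S\<in>{S. v S \<noteq> 0}. ({..<0} - S) \<union> (\<lambda>k. k - d) ` (S - {..<0}) \<union> {0..<-d})"
    using nord_shift_nonzero by fast
  show "finite \<dots>"
    using assms by (auto simp: fock_def maya_def)
qed

lemma double_sum_commute:
  fixes a b :: "int \<Rightarrow> complex"
  assumes "finite U" "maya_supported v"
    and coeff: "\<And>i. a i * b (i + d1) = b i * a (i + d2)"
    and cover: "\<And>i. i \<in> U \<Longrightarrow> i + d1 \<notin> U \<or> i + d2 \<notin> U \<Longrightarrow> E i (i + d1 + d2) v = (\<lambda>_. 0)"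
  shows "(\<Sum>i\<in>U. \<Sum>k\<in>U. a i * b k * nord i (i + d1) (nord k (k + d2) v) T)
       = (\<Sum>i\<in>U. \<Sum>k\<in>U. a i * b k * nord k (k + d2) (nord i (i + d1) v) T)"
proof -
  define h where "h i = a i * b (i + d1) * E i (i + d1 + d2) v T" for i
  have restrict: "(\<Sum>i\<in>U. if i + d \<in> U then h i else 0) = sum h U" if "d = d1 \<or> d = d2" for d
    using that cover by (intro sum.cong) (auto simp: h_def)
  have first: "(\<Sum>i\<in>U. \<Sum>k\<in>U. if k = i + d1 then a i * b k * E i (k + d2) v T else 0)
      = sum h U"
    using restrict[of d1] unfolding h_def by (simp add: sum.delta[OF \<open>finite U\<close>])
  have second: "(\<Sum>i\<in>U. \<Sum>k\<in>U. if i = k + d2 then a i * b k * E k (i + d1) v T else 0)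
      = sum h U"
  proof -
    have h_swapped: "h k = a (k + d2) * b k * E k (k + d2 + d1) v T" for k
      using coeff[of k] by (simp add: h_def ac_simps)
    show ?thesis
      using restrict[of d2] unfolding h_swapped
      by (subst sum.swap) (simp add: sum.delta[OF \<open>finite U\<close>])
  qed
  have "(\<Sum>i\<in>U. \<Sum>k\<in>U. a i * b k * nord i (i + d1) (nord k (k + d2) v) T)
      - (\<Sum>i\<in>U. \<Sum>k\<in>U. a i * b k * nord k (k + d2) (nord i (i + d1) v) T)
      = (\<Sum>i\<in>U. \<Sum>k\<in>U. a i * b k * (nord i (i + d1) (nord k (k + d2) v) T
          - nord k (k + d2) (nord i (i + d1) v) T))"
    by (simp add: right_diff_distrib sum_subtractf)
  also have "\<dots> = (\<Sum>i\<in>U. \<Sum>k\<in>U. (if k = i + d1 then a i * b k * E i (k + d2) v T else 0)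
      - (if i = k + d2 then a i * b k * E k (i + d1) v T else 0))"
  proof (intro sum.cong refl)
    fix i k
    show "a i * b k * (nord i (i + d1) (nord k (k + d2) v) T - nord k (k + d2) (nord i (i + d1) v) T)
      = (if k = i + d1 then a i * b k * E i (k + d2) v T else 0)
        - (if i = k + d2 then a i * b k * E k (i + d1) v T else 0)"
      unfolding nord_commutator[OF \<open>maya_supported v\<close>]
      by (cases "k = i + d1"; cases "i = k + d2") (auto simp: algebra_simps)
  qed
  also have "\<dots> = 0"
    using first second by (simp add: sum_subtractf)
  finally show ?thesis
    by simp
qed

lemma obtain_shift_cover:
  assumes "v \<in> fock" "finite A" and shifts: "d1 + d2 = 0 \<Longrightarrow> d1 = d2"
  obtains U where "finite U" "A \<subseteq> U"
    "\<And>i. i \<in> U \<Longrightarrow> i + d1 \<notin> U \<or> i + d2 \<notin> U \<Longrightarrow> E i (i + d1 + d2) v = (\<lambda>_. 0)"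
proof (cases "d1 = 0 \<and> d2 = 0")
  case True
  with \<open>finite A\<close> show ?thesis
    by (intro that[of A]) auto
next
  case False
  then have "d1 + d2 \<noteq> 0"
    using shifts by auto
  define W where "W = {i. nord i (i + (d1 + d2)) v \<noteq> (\<lambda>_. 0)}"
  have "finite W"
    unfolding W_def using \<open>v \<in> fock\<close> by (rule finite_nord_shift_support)
  show ?thesis
  proof (rule that[of "A \<union> W \<union> (\<lambda>i. i + d1) ` W \<union> (\<lambda>i. i + d2) ` W"])
    fix i
    assume "i \<in> A \<union> W \<union> (\<lambda>i. i + d1) ` W \<union> (\<lambda>i. i + d2) ` W"
      and "i + d1 \<notin> A \<union> W \<union> (\<lambda>i. i + d1) ` W \<union> (\<lambda>i. i + d2) ` W
        \<or> i + d2 \<notin> A \<union> W \<union> (\<lambda>i. i + d1) ` W \<union> (\<lambda>i. i + d2) ` W"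
    then have "i \<notin> W"
      by auto
    with \<open>d1 + d2 \<noteq> 0\<close> show "E i (i + d1 + d2) v = (\<lambda>_. 0)"
      by (simp add: W_def nord_off_diag add.assoc)
  qed (use \<open>finite A\<close> \<open>finite W\<close> in auto)
qed

definition nord_series :: "(int \<Rightarrow> complex) \<Rightarrow> int \<Rightarrow> fvec \<Rightarrow> fvec" where
  "nord_series a d v = (\<lambda>T. \<Sum>i\<in>{i. nord i (i + d) v \<noteq> (\<lambda>_. 0)}. a i * nord i (i + d) v T)"

lemma nord_series_eq_sum:
  assumes "finite U" "{i. nord i (i + d) v \<noteq> (\<lambda>_. 0)} \<subseteq> U"
  shows "nord_series a d v = (\<lambda>T. \<Sum>i\<in>U. a i * nord i (i + d) v T)"
  unfolding nord_series_def by (rule ext, rule sum.mono_neutral_left[OF assms]) auto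

lemma nord_series_in_fock: "v \<in> fock \<Longrightarrow> nord_series a d v \<in> fock"
  unfolding nord_series_def
  by (intro lincomb_in_fock finite_nord_shift_support nord_in_fock)

lemma nord_series_commute:
  assumes "v \<in> fock" and shifts: "d1 + d2 = 0 \<Longrightarrow> d1 = d2"
    and coeff: "\<And>i. a i * b (i + d1) = b i * a (i + d2)"
  shows "nord_series a d1 (nord_series b d2 v) = nord_series b d2 (nord_series a d1 v)"
proof -
  define supp where "supp d w = {i. nord i (i + d) w \<noteq> (\<lambda>_. 0)}" for d w
  let ?A = "supp d2 v \<union> supp d1 v \<union> supp d1 (nord_series b d2 v) \<union> supp d2 (nord_series a d1 v)"
  have "finite ?A"
    unfolding supp_def using \<open>v \<in> fock\<close>
    by (intro finite_UnI finite_nord_shift_support nord_series_in_fock)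
  obtain U where U: "finite U" "?A \<subseteq> U"
    and cover: "\<And>i. i \<in> U \<Longrightarrow> i + d1 \<notin> U \<or> i + d2 \<notin> U \<Longrightarrow> E i (i + d1 + d2) v = (\<lambda>_. 0)"
    using obtain_shift_cover[OF \<open>v \<in> fock\<close> \<open>finite ?A\<close> shifts] by blast
  have sum_U: "nord_series c d w = (\<lambda>T. \<Sum>i\<in>U. c i * nord i (i + d) w T)" if "supp d w \<subseteq> U" for c d w
    using that unfolding supp_def by (rule nord_series_eq_sum[OF \<open>finite U\<close>])
  have lhs: "nord_series a d1 (nord_series b d2 v)
      = (\<lambda>T. \<Sum>i\<in>U. \<Sum>k\<in>U. a i * b k * nord i (i + d1) (nord k (k + d2) v) T)"
  proof -
    have "supp d1 (nord_series b d2 v) \<subseteq> U" "supp d2 v \<subseteq> U"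
      using U(2) by auto
    then show ?thesis
      unfolding sum_U[OF \<open>supp d1 (nord_series b d2 v) \<subseteq> U\<close>]
      unfolding sum_U[OF \<open>supp d2 v \<subseteq> U\<close>] nord_sum
      by (simp add: sum_distrib_left mult.assoc)
  qed
  have rhs: "nord_series b d2 (nord_series a d1 v)
      = (\<lambda>T. \<Sum>i\<in>U. \<Sum>k\<in>U. a i * b k * nord k (k + d2) (nord i (i + d1) v) T)"
  proof -
    have "supp d2 (nord_series a d1 v) \<subseteq> U" "supp d1 v \<subseteq> U"
      using U(2) by auto
    then show ?thesis
      unfolding sum_U[OF \<open>supp d2 (nord_series a d1 v) \<subseteq> U\<close>]
      unfolding sum_U[OF \<open>supp d1 v \<subseteq> U\<close>] nord_sum
      by (subst sum.swap) (simp add: sum_distrib_left mult.assoc mult.left_commute)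
  qed
  show ?thesis
    unfolding lhs rhs using double_sum_commute[OF \<open>finite U\<close> _ coeff cover] \<open>v \<in> fock\<close>
    by (simp add: fock_iff)
qed

lemma Jop_eq_nord_series: "Jop m n F = nord_series (\<lambda>i. \<Prod>k<m. F (i + n * int k)) (n * int m)"
  by (intro ext) (simp add: Jop_def nord_series_def)

lemma prod_progression_split:
  "(\<Prod>k<m + m'. f (i + n * int k))
     = (\<Prod>k<m. f (i + n * int k)) * (\<Prod>k<m'. f (i + n * int m + n * int k))"
  by (induction m') (simp_all add: distrib_left add.assoc mult.assoc)

theorem mainTheorem3:
  fixes F :: "int \<Rightarrow> complex" and n :: int and m m' :: nat
  assumes "m \<ge> 1" and "m' \<ge> 1" and "v \<in> fock"
  shows "Jop m n F (Jop m' n F v) = Jop m' n F (Jop m n F v)"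
proof -
  have coeff: "(\<Prod>k<m. F (i + n * int k)) * (\<Prod>k<m'. F (i + n * int m + n * int k))
      = (\<Prod>k<m'. F (i + n * int k)) * (\<Prod>k<m. F (i + n * int m' + n * int k))" for i
    using prod_progression_split[of F i n m m'] prod_progression_split[of F i n m' m]
    by (simp add: add.commute)
  have shifts: "n * int m + n * int m' = 0 \<Longrightarrow> n * int m = n * int m'"
    using assms(1,2) by (simp flip: distrib_left)
  show ?thesis
    unfolding Jop_eq_nord_series
    by (rule nord_series_commute[OF assms(3) shifts coeff])
qed

end
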